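(* Let $U\subseteq\mathbb{R}^n$ be an $n$-dimensional compact convex set, and let $x_0,\ldots,x_n\in\partial U$ be affinely independent (so they are the vertices of an $n$-simplex). Then for each $u\in U$ there exists $m\in\{0,\ldots,n\}$ such that the straight line $\ell_{u,x_m}$ through $u$ and $x_m$ intersects the affine hull $\mathrm{aff}(\{x_0,\ldots,x_n\}\setminus\{x_m\})$ at a point of $U$. *)

theory Defs
  imports "HOL-Analysis.Analysis"
begin

end

theory Submission
  imports Defs
begin

text \<open>
  Write \<open>u\<close> in barycentric coordinates \<open>c\<close> with respect to the vertices and pick a vertex
  \<open>x\<^sub>m\<close> of smallest coordinate; then \<open>c\<^sub>m < 1\<close>, and the point
  \<open>p = (u - c\<^sub>m x\<^sub>m) / (1 - c\<^sub>m)\<close> lies on the line through \<open>u\<close> and \<open>x\<^sub>m\<close> and in the affine hull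
  of the remaining vertices. If \<open>c\<^sub>m \<le> 0\<close>, then \<open>p\<close> is a convex combination of \<open>u\<close> and \<open>x\<^sub>m\<close>;
  if \<open>c\<^sub>m > 0\<close>, all coordinates are positive and \<open>p\<close> is a convex combination of the other
  vertices. Either way \<open>p \<in> U\<close> by convexity.
\<close>

lemma obtain_min_weight_less_one:
  fixes c :: "'a \<Rightarrow> real"
  assumes "finite V" and "2 \<le> card V" and "sum c V = 1"
  obtains v where "v \<in> V" and "\<And>w. w \<in> V \<Longrightarrow> c v \<le> c w" and "c v < 1"
proof -
  have "V \<noteq> {}" using assms(2) by auto
  then have "Min (c ` V) \<in> c ` V" using \<open>finite V\<close> by simp
  then obtain v where v: "v \<in> V" "c v = Min (c ` V)" by auto
  then have min: "\<And>w. w \<in> V \<Longrightarrow> c v \<le> c w" using \<open>finite V\<close> by simp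
  have "c v < 1"
  proof (rule ccontr)
    assume "\<not> c v < 1"
    then have "(\<Sum>w\<in>V. 1) \<le> sum c V" using min by (intro sum_mono) force
    then show False using assms by simp
  qed
  with v(1) min show thesis by (rule that)
qed

lemma affine_combination_remove_point:
  fixes u :: "'a::real_vector"
  assumes "finite V" and "v \<in> V" and "sum c V = 1" and "(\<Sum>w\<in>V. c w *\<^sub>R w) = u"
    and "c v \<noteq> 1"
  shows "(\<Sum>w\<in>V - {v}. c w / (1 - c v)) = 1"
    and "(\<Sum>w\<in>V - {v}. (c w / (1 - c v)) *\<^sub>R w)
           = (1 / (1 - c v)) *\<^sub>R u + (- c v / (1 - c v)) *\<^sub>R v"
proof -
  have s: "1 - c v \<noteq> 0" using assms(5) by simp
  have c_split: "sum c (V - {v}) = 1 - c v"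
    using sum.remove[OF assms(1,2), of c] assms(3) by simp
  have u_split: "(\<Sum>w\<in>V - {v}. c w *\<^sub>R w) = u - c v *\<^sub>R v"
    using sum.remove[OF assms(1,2), of "\<lambda>w. c w *\<^sub>R w"] assms(4) by simp
  show "(\<Sum>w\<in>V - {v}. c w / (1 - c v)) = 1"
    using s c_split by (simp add: sum_divide_distrib[symmetric])
  have "(\<Sum>w\<in>V - {v}. (c w / (1 - c v)) *\<^sub>R w) = (1 / (1 - c v)) *\<^sub>R (\<Sum>w\<in>V - {v}. c w *\<^sub>R w)"
    by (simp add: scaleR_sum_right divide_inverse mult.commute)
  also have "\<dots> = (1 / (1 - c v)) *\<^sub>R u + (- c v / (1 - c v)) *\<^sub>R v"
    by (simp add: u_split algebra_simps divide_inverse)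
  finally show "(\<Sum>w\<in>V - {v}. (c w / (1 - c v)) *\<^sub>R w)
           = (1 / (1 - c v)) *\<^sub>R u + (- c v / (1 - c v)) *\<^sub>R v" .
qed

lemma convex_line_through_vertex_meets_opposite_face:
  fixes U :: "'a::real_vector set"
  assumes "convex U" and "finite V" and "2 \<le> card V" and "V \<subseteq> U"
    and "u \<in> U" and "u \<in> affine hull V"
  shows "\<exists>v\<in>V. \<exists>p\<in>U. p \<in> affine hull {u, v} \<and> p \<in> affine hull (V - {v})"
proof -
  obtain c where c_sum: "sum c V = 1" and c_u: "(\<Sum>w\<in>V. c w *\<^sub>R w) = u"
    using assms(6) affine_hull_finite[OF assms(2)] by auto
  obtain v where v: "v \<in> V" and v_min: "\<And>w. w \<in> V \<Longrightarrow> c v \<le> c w" and "c v < 1"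
    using obtain_min_weight_less_one[OF assms(2,3) c_sum] by blast
  define p where "p = (\<Sum>w\<in>V - {v}. (c w / (1 - c v)) *\<^sub>R w)"
  have weights: "(\<Sum>w\<in>V - {v}. c w / (1 - c v)) = 1"
    and p_line: "p = (1 / (1 - c v)) *\<^sub>R u + (- c v / (1 - c v)) *\<^sub>R v"
    using affine_combination_remove_point[OF assms(2) v c_sum c_u] \<open>c v < 1\<close>
    by (auto simp: p_def)
  have line_weights: "1 / (1 - c v) + - c v / (1 - c v) = 1"
    using \<open>c v < 1\<close> by (simp add: field_simps)
  have "p \<in> affine hull {u, v}"
    unfolding affine_hull_2 p_line using line_weights by blast
  moreover have "p \<in> affine hull (V - {v})"
    unfolding affine_hull_finite[OF finite_Diff[OF assms(2)]] mem_Collect_eq p_def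
    by (rule exI[of _ "\<lambda>w. c w / (1 - c v)"]) (simp add: weights)
  moreover have "p \<in> U"
  proof (cases "c v \<le> 0")
    case True
    show ?thesis
      unfolding p_line
    proof (rule convexD[OF assms(1,5)])
      show "v \<in> U" using v assms(4) by blast
      show "0 \<le> - c v / (1 - c v)" using True \<open>c v < 1\<close> by (simp add: divide_nonpos_pos)
      show "0 \<le> 1 / (1 - c v)" using \<open>c v < 1\<close> by simp
    qed (rule line_weights)
  next
    case False
    show ?thesis
      unfolding p_def
    proof (rule convex_sum[OF _ assms(1) weights])
      show "0 \<le> c w / (1 - c v)" if "w \<in> V - {v}" for w
        using False v_min[of w] that \<open>c v < 1\<close> by simp
    qed (use assms(2,4) in auto)
  qed
  ultimately show ?thesis using v by blast
qed

theorem lemma6p2: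
  fixes U :: "'a::euclidean_space set" and x :: "nat \<Rightarrow> 'a" and u :: 'a
  assumes "compact U" and "convex U" and "aff_dim U = int DIM('a)"
    and "\<And>i. i \<in> {0..DIM('a)} \<Longrightarrow> x i \<in> frontier U"
    and "inj_on x {0..DIM('a)}"
    and "\<not> affine_dependent (x ` {0..DIM('a)})"
    and "u \<in> U"
  shows "\<exists>m \<in> {0..DIM('a)}. \<exists>p \<in> U.
           p \<in> affine hull {u, x m} \<and> p \<in> affine hull (x ` ({0..DIM('a)} - {m}))"
proof -
  let ?I = "{0..DIM('a)}"
  have card: "card (x ` ?I) = Suc DIM('a)"
    using assms(5) by (simp add: card_image)
  have "affine hull (x ` ?I) = UNIV"
    using affine_independent_span_eq[OF assms(6) card] .
  moreover have "x ` ?I \<subseteq> U"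
    using assms(4) frontier_subset_closed[OF compact_imp_closed[OF assms(1)]] by auto
  ultimately have "\<exists>v\<in>x ` ?I. \<exists>p\<in>U. p \<in> affine hull {u, v} \<and> p \<in> affine hull (x ` ?I - {v})"
    using card by (intro convex_line_through_vertex_meets_opposite_face[OF assms(2)]) (auto simp: assms(7))
  then obtain m where "m \<in> ?I" and "\<exists>p\<in>U. p \<in> affine hull {u, x m} \<and> p \<in> affine hull (x ` ?I - {x m})"
    by blast
  moreover have "x ` ?I - {x m} = x ` (?I - {m})"
    using inj_on_image_set_diff[OF assms(5)] \<open>m \<in> ?I\<close> by auto
  ultimately show ?thesis by auto
qed

end
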